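(* Let $K_n$ be the complete directed graph on $[n]$ with edges $(i,j)$ for all $i<j$. A subgraph $H\subseteq K_n$ gives a face $\tilde Q_H$ of $\tilde Q_{K_n}$ if and only if there are integers $0=n_0<n_1<\dots<n_\ell<n_{\ell+1}=n$ ($\ell\ge0$) such that $H=K_{[n_0+1,n_1]}\sqcup K_{[n_1+1,n_2]}\sqcup\dots\sqcup K_{[n_\ell+1,n]}$, i.e. $E(H)=\{(i,j):i<j,\ i,j\in[n_k+1,n_{k+1}]\text{ for some }k\}$.
   Context: $[a,b]=\{a,a+1,\dots,b\}$, and $K_P$ denotes the complete graph on $P$ with edges oriented from smaller to larger vertex. Subgraphs $H\subseteq K_n$ have vertex set $[n]$. $\tilde Q_H=\mathrm{conv}(\{\mathbf 0\}\cup\{\mathbf e_i-\mathbf e_j:(i,j)\in E(H)\})\subset\mathbb R^n$. *)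

theory Defs
  imports "HOL-Analysis.Analysis" "HOL-Library.Function_Algebras"
begin

text \<open>Vectors of R^n are modelled as functions nat => real (coordinates 1..n used);
  we equip functions with the pointwise real vector space structure.\<close>

instantiation "fun" :: (type, real_vector) real_vector
begin
definition scaleR_fun :: "real \<Rightarrow> ('a \<Rightarrow> 'b) \<Rightarrow> 'a \<Rightarrow> 'b"
  where "scaleR_fun r f = (\<lambda>x. r *\<^sub>R f x)"
instance
  by standard (auto simp: scaleR_fun_def fun_eq_iff scaleR_add_right scaleR_add_left)
end

definition unitv :: "nat \<Rightarrow> nat \<Rightarrow> real" where
  "unitv i = (\<lambda>k. if k = i then 1 else 0)"

definition K_edges :: "nat \<Rightarrow> nat \<Rightarrow> (nat \<times> nat) set" where
  "K_edges a b = {(i, j). a \<le> i \<and> i < j \<and> j \<le> b}"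

definition Qtilde :: "(nat \<times> nat) set \<Rightarrow> (nat \<Rightarrow> real) set" where
  "Qtilde E = convex hull (insert 0 {unitv i - unitv j | i j. (i, j) \<in> E})"

end

theory Submission
  imports Defs
begin

text \<open>
  A root e_a - e_b lies in the root polytope of H only if (a, b) is an edge of H, since
  x \<mapsto> x_b - x_a is at least -1 on all other generators. If the polytope of H is a face,
  the midpoint identity (0 + (e_i - e_j))/2 = ((e_i - e_m) + (e_m - e_j))/2 for i < m < j
  forces H to be closed under splitting an edge at an intermediate vertex and under
  transitivity; such an H is determined by its missing consecutive edges (m, m+1), which
  are exactly the cut points between the blocks. Conversely, for cut points c the linear
  functional x \<mapsto> \<Sum>_c \<Sum>_{i \<le> c} x_i counts the cuts crossed by e_a - e_b, so it is
  nonnegative on the polytope of K_n and vanishes on exactly the generators of H, which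
  therefore span a face.
\<close>

lemma linear_lower_bound_convex_hull:
  fixes f :: "'a::real_vector \<Rightarrow> real"
  assumes "linear f" "\<And>v. v \<in> V \<Longrightarrow> c \<le> f v" "x \<in> convex hull V"
  shows "c \<le> f x"
proof -
  have "convex hull V \<subseteq> f -` {c..}"
    by (rule hull_minimal) (use assms in \<open>auto intro: convex_linear_vimage\<close>)
  then show ?thesis using assms(3) by auto
qed

lemma convex_linear_level_set:
  fixes f :: "'a::real_vector \<Rightarrow> real"
  assumes "linear f"
  shows "convex {x. f x = c}"
  using convex_linear_vimage[OF assms convex_singleton, of c] by (simp add: vimage_def)

lemma convex_hull_Int_level_set:
  fixes f :: "'a::real_vector \<Rightarrow> real"
  assumes f: "linear f" and V: "finite V" and bound: "\<And>v. v \<in> V \<Longrightarrow> c \<le> f v"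
  shows "convex hull V \<inter> {x. f x = c} = convex hull {v\<in>V. f v = c}"
proof
  show "convex hull {v\<in>V. f v = c} \<subseteq> convex hull V \<inter> {x. f x = c}"
    by (rule hull_minimal)
      (auto intro: hull_inc convex_Int convex_linear_level_set[OF f])
next
  show "convex hull V \<inter> {x. f x = c} \<subseteq> convex hull {v\<in>V. f v = c}"
  proof
    fix x assume "x \<in> convex hull V \<inter> {x. f x = c}"
    then have "x \<in> convex hull V" and fx: "f x = c" by auto
    then obtain u where u: "\<And>v. v \<in> V \<Longrightarrow> 0 \<le> u v" "sum u V = 1" "(\<Sum>v\<in>V. u v *\<^sub>R v) = x"
      unfolding convex_hull_finite[OF V] by blast
    have "f x = (\<Sum>v\<in>V. u v * f v)"
      unfolding u(3)[symmetric] linear_sum[OF f] by (simp add: linear_scale[OF f])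
    then have "(\<Sum>v\<in>V. u v * (f v - c)) = f x - c * sum u V"
      by (simp add: algebra_simps sum_subtractf sum_distrib_left)
    then have "(\<Sum>v\<in>V. u v * (f v - c)) = 0" using fx u(2) by simp
    then have "\<forall>v\<in>V. u v * (f v - c) = 0"
      using sum_nonneg_eq_0_iff[OF V, of "\<lambda>v. u v * (f v - c)"] u(1) bound by simp
    then have zero: "\<forall>v\<in>V - {v\<in>V. f v = c}. u v = 0" by auto
    have "sum u {v\<in>V. f v = c} = sum u V"
      by (rule sum.mono_neutral_left[OF V]) (use zero in auto)
    moreover have "(\<Sum>v\<in>{v\<in>V. f v = c}. u v *\<^sub>R v) = (\<Sum>v\<in>V. u v *\<^sub>R v)"
      by (rule sum.mono_neutral_left[OF V]) (use zero in auto)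
    ultimately have "sum u {v\<in>V. f v = c} = 1" "(\<Sum>v\<in>{v\<in>V. f v = c}. u v *\<^sub>R v) = x"
      using u(2,3) by simp_all
    moreover have "finite {v\<in>V. f v = c}"
      using V by simp
    ultimately show "x \<in> convex hull {v\<in>V. f v = c}"
      using u(1) convex_hull_finite[of "{v\<in>V. f v = c}"] by blast
  qed
qed

lemma face_of_convex_hull_level_set:
  fixes f :: "'a::real_vector \<Rightarrow> real"
  assumes f: "linear f" and V: "finite V" and bound: "\<And>v. v \<in> V \<Longrightarrow> c \<le> f v"
  shows "convex hull {v\<in>V. f v = c} face_of convex hull V"
proof -
  have ends: "f a = c \<and> f b = c"
    if a: "a \<in> convex hull V" and b: "b \<in> convex hull V"
      and fx: "f x = c" and x: "x \<in> open_segment a b" for a b x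
  proof -
    obtain t where t: "0 < t" "t < 1" and xab: "x = (1 - t) *\<^sub>R a + t *\<^sub>R b"
      using x unfolding in_segment(2) by blast
    have "c \<le> f a" "c \<le> f b"
      using linear_lower_bound_convex_hull[OF f bound] a b by auto
    then have "0 \<le> (1 - t) * (f a - c)" "0 \<le> t * (f b - c)"
      using t by simp_all
    moreover have "f x = (1 - t) * f a + t * f b"
      unfolding xab linear_add[OF f] linear_scale[OF f] by simp
    then have "(1 - t) * (f a - c) + t * (f b - c) = 0"
      using fx by (simp add: algebra_simps)
    ultimately have "(1 - t) * (f a - c) = 0" "t * (f b - c) = 0"
      by linarith+
    then show ?thesis
      using t by simp
  qed
  then have "convex hull V \<inter> {x. f x = c} face_of convex hull V"
    unfolding face_of_def
    using ends convex_Int[OF convex_convex_hull convex_linear_level_set[OF f]] by blast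
  then show ?thesis
    by (simp only: convex_hull_Int_level_set[OF assms])
qed

lemma Qtilde_eq_convex_hull_image:
  "Qtilde E = convex hull (insert 0 ((\<lambda>(i, j). unitv i - unitv j) ` E))"
  unfolding Qtilde_def by (rule arg_cong[where f = "\<lambda>S. convex hull S"]) auto

lemma root_mem_Qtilde: "(i, j) \<in> E \<Longrightarrow> unitv i - unitv j \<in> Qtilde E"
  unfolding Qtilde_def by (rule hull_inc) auto

lemma zero_mem_Qtilde: "0 \<in> Qtilde E"
  unfolding Qtilde_def by (rule hull_inc) auto

lemma finite_K_edges: "finite (K_edges a b)"
  by (rule finite_subset[of _ "{a..b} \<times> {a..b}"]) (auto simp: K_edges_def)

lemma root_mem_Qtilde_iff:
  assumes irrefl: "\<And>i. (i, i) \<notin> E" and "a \<noteq> b"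
  shows "unitv a - unitv b \<in> Qtilde E \<longleftrightarrow> (a, b) \<in> E"
proof
  assume mem: "unitv a - unitv b \<in> Qtilde E"
  define g where "g x = x b - x a" for x :: "nat \<Rightarrow> real"
  have lin: "linear g"
    by (rule linearI) (simp_all add: g_def scaleR_fun_def algebra_simps)
  show "(a, b) \<in> E"
  proof (rule ccontr)
    assume "(a, b) \<notin> E"
    then have "- 1 \<le> g v" if "v \<in> insert 0 ((\<lambda>(i, j). unitv i - unitv j) ` E)" for v
      using that irrefl by (auto simp: g_def unitv_def)
    then have "- 1 \<le> g (unitv a - unitv b)"
      using linear_lower_bound_convex_hull[OF lin] mem
      unfolding Qtilde_eq_convex_hull_image by blast
    then show False
      using \<open>a \<noteq> b\<close> by (simp add: g_def unitv_def)
  qed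
qed (rule root_mem_Qtilde)

lemma midpoint_root_split:
  "midpoint 0 (unitv i - unitv j) = midpoint (unitv i - unitv m) (unitv m - unitv j)"
  by (simp add: midpoint_def fun_eq_iff scaleR_fun_def)

lemma face_of_Qtilde_split:
  assumes face: "Qtilde E face_of Qtilde (K_edges 1 n)" and sub: "E \<subseteq> K_edges 1 n"
    and ij: "(i, j) \<in> E" and "i < m" "m < j"
  shows "(i, m) \<in> E \<and> (m, j) \<in> E"
proof -
  have "midpoint 0 (unitv i - unitv j) \<in> Qtilde E"
    using midpoints_in_convex_hull zero_mem_Qtilde root_mem_Qtilde[OF ij]
    unfolding Qtilde_def by blast
  moreover have "unitv i - unitv m \<noteq> unitv m - unitv j"
    using \<open>i < m\<close> \<open>m < j\<close> by (auto simp: fun_eq_iff unitv_def dest: spec[of _ i])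
  moreover have "(i, m) \<in> K_edges 1 n" "(m, j) \<in> K_edges 1 n"
    using sub ij \<open>i < m\<close> \<open>m < j\<close> by (auto simp: K_edges_def)
  ultimately have "unitv i - unitv m \<in> Qtilde E \<and> unitv m - unitv j \<in> Qtilde E"
    unfolding midpoint_root_split[of i j m]
    by (intro face_ofD[OF face]) (auto intro: root_mem_Qtilde)
  moreover have "\<And>k. (k, k) \<notin> E"
    using sub by (auto simp: K_edges_def)
  ultimately show ?thesis
    using root_mem_Qtilde_iff \<open>i < m\<close> \<open>m < j\<close> by (metis less_irrefl)
qed

lemma face_of_Qtilde_trans:
  assumes face: "Qtilde E face_of Qtilde (K_edges 1 n)" and sub: "E \<subseteq> K_edges 1 n"
  shows "trans E"
proof (rule transI)
  fix i m j assume im: "(i, m) \<in> E" and mj: "(m, j) \<in> E"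
  then have ord: "1 \<le> i" "i < m" "m < j" "j \<le> n"
    using sub by (auto simp: K_edges_def)
  have "midpoint (unitv i - unitv m) (unitv m - unitv j) \<in> Qtilde E"
    using midpoints_in_convex_hull root_mem_Qtilde[OF im] root_mem_Qtilde[OF mj]
    unfolding Qtilde_def by blast
  moreover have "0 \<noteq> unitv i - unitv j"
    using ord by (auto simp: fun_eq_iff unitv_def dest: spec[of _ i])
  moreover have "(i, j) \<in> K_edges 1 n"
    using ord by (auto simp: K_edges_def)
  ultimately have "unitv i - unitv j \<in> Qtilde E"
    unfolding midpoint_root_split[of i j m, symmetric]
    by (meson face_ofD[OF face] midpoint_in_open_segment root_mem_Qtilde zero_mem_Qtilde)
  moreover have "\<And>k. (k, k) \<notin> E"
    using sub by (auto simp: K_edges_def)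
  ultimately show "(i, j) \<in> E"
    using root_mem_Qtilde_iff ord by (metis less_irrefl less_trans)
qed

text \<open>A cut point c separates the block ending at c from the one starting at c + 1;
  the edge (i, j) crosses it when i \<le> c < j.\<close>
definition uncut_edges :: "nat set \<Rightarrow> nat \<Rightarrow> (nat \<times> nat) set" where
  "uncut_edges C n = {(i, j) \<in> K_edges 1 n. \<forall>c\<in>C. \<not> (i \<le> c \<and> c < j)}"

lemma mem_iff_consecutive_edges:
  assumes split: "\<And>i m j. (i, j) \<in> E \<Longrightarrow> i < m \<Longrightarrow> m < j \<Longrightarrow> (i, m) \<in> E \<and> (m, j) \<in> E"
    and "trans E" and "i < j"
  shows "(i, j) \<in> E \<longleftrightarrow> (\<forall>m. i \<le> m \<and> m < j \<longrightarrow> (m, Suc m) \<in> E)"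
proof
  assume ij: "(i, j) \<in> E"
  show "\<forall>m. i \<le> m \<and> m < j \<longrightarrow> (m, Suc m) \<in> E"
  proof (intro allI impI, elim conjE)
    fix m assume "i \<le> m" "m < j"
    then have "(m, j) \<in> E"
      using split[OF ij, of m] ij by (cases "i = m") auto
    then show "(m, Suc m) \<in> E"
      using split[of m j "Suc m"] \<open>m < j\<close> by (cases "Suc m = j") auto
  qed
next
  assume steps: "\<forall>m. i \<le> m \<and> m < j \<longrightarrow> (m, Suc m) \<in> E"
  have "Suc i + d \<le> j \<Longrightarrow> (i, Suc i + d) \<in> E" for d
  proof (induction d)
    case 0
    then show ?case using steps by simp
  next
    case (Suc d)
    then show ?case
      using steps transD[OF \<open>trans E\<close>, of i "Suc i + d" "Suc (Suc i + d)"] by simp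
  qed
  from this[of "j - Suc i"] show "(i, j) \<in> E"
    using \<open>i < j\<close> by simp
qed

lemma split_closed_trans_eq_uncut_edges:
  assumes sub: "E \<subseteq> K_edges 1 n"
    and split: "\<And>i m j. (i, j) \<in> E \<Longrightarrow> i < m \<Longrightarrow> m < j \<Longrightarrow> (i, m) \<in> E \<and> (m, j) \<in> E"
    and "trans E"
  shows "E = uncut_edges {m \<in> {1..<n}. (m, Suc m) \<notin> E} n"
proof (rule set_eqI, clarify)
  fix i j
  show "(i, j) \<in> E \<longleftrightarrow> (i, j) \<in> uncut_edges {m \<in> {1..<n}. (m, Suc m) \<notin> E} n"
  proof (cases "(i, j) \<in> K_edges 1 n")
    case True
    then have "1 \<le> i" "i < j" "j \<le> n"
      by (auto simp: K_edges_def)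
    then have "1 \<le> m \<and> m < n" if "i \<le> m" "m < j" for m
      using that by linarith
    then have "(\<forall>m. i \<le> m \<and> m < j \<longrightarrow> (m, Suc m) \<in> E) \<longleftrightarrow>
        (\<forall>c\<in>{m \<in> {1..<n}. (m, Suc m) \<notin> E}. \<not> (i \<le> c \<and> c < j))"
      by auto
    then show ?thesis
      using mem_iff_consecutive_edges[OF split \<open>trans E\<close> \<open>i < j\<close>] True
      by (auto simp: uncut_edges_def)
  next
    case False
    then show ?thesis
      using sub by (auto simp: uncut_edges_def)
  qed
qed

lemma exists_segment_containing:
  fixes ns :: "nat \<Rightarrow> 'a::linorder"
  assumes "ns 0 < a" "a \<le> ns (Suc l)"
  shows "\<exists>k\<le>l. ns k < a \<and> a \<le> ns (Suc k)"
  using assms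
proof (induction l)
  case (Suc l)
  then show ?case
    by (cases "a \<le> ns (Suc l)") (auto intro: le_SucI dest: not_le_imp_less)
qed auto

lemma blocks_eq_uncut_edges:
  fixes ns :: "nat \<Rightarrow> nat"
  assumes ns: "ns 0 = 0" "ns (Suc l) = n" "\<forall>k\<le>l. ns k < ns (Suc k)"
  shows "(\<Union>k\<le>l. K_edges (ns k + 1) (ns (Suc k))) = uncut_edges (ns ` {1..l}) n"
proof -
  have "ns k < ns k'" if "k < k'" "k' \<le> Suc l" for k k'
    by (rule lift_Suc_mono_less_ivl[of "{..l}"]) (use ns(3) that in auto)
  then have le: "ns k \<le> ns k'" if "k \<le> k'" "k' \<le> Suc l" for k k'
    using that by (cases "k = k'") (auto intro: less_imp_le)
  show ?thesis
  proof (rule subset_antisym; rule subrelI)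
    fix i j
    assume "(i, j) \<in> (\<Union>k\<le>l. K_edges (ns k + 1) (ns (Suc k)))"
    then obtain k0 where k0: "k0 \<le> l" "ns k0 < i" "i < j" "j \<le> ns (Suc k0)"
      by (auto simp: K_edges_def)
    have "\<not> (i \<le> ns k \<and> ns k < j)" if "k \<in> {1..l}" for k
      using le[of k k0] le[of "Suc k0" k] that k0 by (cases "k \<le> k0") auto
    moreover have "j \<le> n"
      using le[of "Suc k0" "Suc l"] k0 ns(2) by simp
    ultimately show "(i, j) \<in> uncut_edges (ns ` {1..l}) n"
      using k0 by (auto simp: uncut_edges_def K_edges_def)
  next
    fix i j
    assume "(i, j) \<in> uncut_edges (ns ` {1..l}) n"
    then have ij: "1 \<le> i" "i < j" "j \<le> n"
      and uncut: "\<And>k. k \<in> {1..l} \<Longrightarrow> \<not> (i \<le> ns k \<and> ns k < j)"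
      by (auto simp: uncut_edges_def K_edges_def)
    obtain k0 where k0: "k0 \<le> l" "ns k0 < i" "i \<le> ns (Suc k0)"
      using exists_segment_containing[of ns i l] ns ij by auto
    have "j \<le> ns (Suc k0)"
    proof (cases "k0 = l")
      case True
      then show ?thesis using ns(2) ij by simp
    next
      case False
      then show ?thesis using uncut[of "Suc k0"] k0 by auto
    qed
    then show "(i, j) \<in> (\<Union>k\<le>l. K_edges (ns k + 1) (ns (Suc k)))"
      using k0 ij by (auto simp: K_edges_def intro!: bexI[of _ k0])
  qed
qed

lemma obtain_cut_points:
  assumes "C \<subseteq> {1..<n}" "0 < n"
  obtains l and ns :: "nat \<Rightarrow> nat"
  where "ns 0 = 0" "ns (Suc l) = n" "\<forall>k\<le>l. ns k < ns (Suc k)" "ns ` {1..l} = C"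
proof
  define xs where "xs = sorted_list_of_set C"
  have set_xs: "set xs = C"
    unfolding xs_def using finite_subset[OF assms(1)] by simp
  define ns where "ns k = (0 # xs @ [n]) ! k" for k
  have sorted: "sorted_wrt (<) (0 # xs @ [n])"
    using assms set_xs by (auto simp: xs_def sorted_wrt_append)
  show "\<forall>k\<le>length xs. ns k < ns (Suc k)"
  proof (intro allI impI)
    fix k assume "k \<le> length xs"
    then show "ns k < ns (Suc k)"
      using sorted_wrt_nth_less[OF sorted, of k "Suc k"] by (simp add: ns_def)
  qed
  show "ns 0 = 0" "ns (Suc (length xs)) = n"
    by (simp_all add: ns_def)
  have "ns ` {1..length xs} = ns ` Suc ` {..<length xs}"
    by (simp add: image_Suc_lessThan)
  also have "\<dots> = set xs"
    by (auto simp: ns_def set_conv_nth image_iff nth_append)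
  finally show "ns ` {1..length xs} = C"
    using set_xs by simp
qed

lemma face_of_Qtilde_uncut_edges:
  assumes "finite C"
  shows "Qtilde (uncut_edges C n) face_of Qtilde (K_edges 1 n)"
proof -
  define f where "f x = (\<Sum>c\<in>C. \<Sum>i\<in>{1..c}. x i)" for x :: "nat \<Rightarrow> real"
  have lin: "linear f"
    by (rule linearI) (simp_all add: f_def scaleR_fun_def sum.distrib sum_distrib_left)
  have f_root: "f (unitv a - unitv b) = (\<Sum>c\<in>C. of_bool (a \<le> c \<and> c < b))"
    if "(a, b) \<in> K_edges 1 n" for a b
  proof -
    have "1 \<le> a" "a < b"
      using that by (auto simp: K_edges_def)
    then have "(\<Sum>i\<in>{1..c}. (unitv a - unitv b) i) = of_bool (a \<le> c \<and> c < b)" for c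
      by (simp add: unitv_def sum_subtractf sum.delta)
    then show ?thesis
      by (simp add: f_def)
  qed
  have f_root_eq_0: "f (unitv a - unitv b) = 0 \<longleftrightarrow> (a, b) \<in> uncut_edges C n"
    if "(a, b) \<in> K_edges 1 n" for a b
    using that sum_nonneg_eq_0_iff[OF assms, of "\<lambda>c. of_bool (a \<le> c \<and> c < b) :: real"]
    by (simp add: f_root uncut_edges_def)
  define V where "V = insert 0 ((\<lambda>(i, j). unitv i - unitv j) ` K_edges 1 n)"
  have "finite V"
    unfolding V_def using finite_K_edges by simp
  moreover have "0 \<le> f v" if "v \<in> V" for v
    using that f_root by (auto simp: V_def f_def[of 0] sum_nonneg)
  ultimately have "convex hull {v \<in> V. f v = 0} face_of convex hull V"
    by (rule face_of_convex_hull_level_set[OF lin])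
  moreover have "{v \<in> V. f v = 0} = insert 0 ((\<lambda>(i, j). unitv i - unitv j) ` uncut_edges C n)"
    using f_root_eq_0 by (auto simp: V_def f_def[of 0] uncut_edges_def)
  ultimately show ?thesis
    unfolding Qtilde_eq_convex_hull_image V_def by simp
qed

theorem mainTheorem17:
  fixes n :: nat and E :: "(nat \<times> nat) set"
  assumes "1 \<le> n" and "E \<subseteq> K_edges 1 n"
  shows "Qtilde E face_of Qtilde (K_edges 1 n) \<longleftrightarrow>
    (\<exists>(l::nat) (ns::nat \<Rightarrow> nat). ns 0 = 0 \<and> ns (Suc l) = n \<and>
       (\<forall>k\<le>l. ns k < ns (Suc k)) \<and>
       E = (\<Union>k\<le>l. K_edges (ns k + 1) (ns (Suc k))))"
proof
  assume face: "Qtilde E face_of Qtilde (K_edges 1 n)"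
  define C where "C = {m \<in> {1..<n}. (m, Suc m) \<notin> E}"
  have "E = uncut_edges C n"
    unfolding C_def using split_closed_trans_eq_uncut_edges[OF assms(2)]
      face_of_Qtilde_split[OF face assms(2)] face_of_Qtilde_trans[OF face assms(2)] by blast
  moreover have "C \<subseteq> {1..<n}" "0 < n"
    using assms(1) by (auto simp: C_def)
  then obtain l ns where ns: "ns 0 = 0" "ns (Suc l) = n" "\<forall>k\<le>l. ns k < ns (Suc k)"
    and "ns ` {1..l} = C"
    by (rule obtain_cut_points)
  ultimately have "E = (\<Union>k\<le>l. K_edges (ns k + 1) (ns (Suc k)))"
    using blocks_eq_uncut_edges[OF ns] by simp
  with ns show "\<exists>l ns. ns 0 = 0 \<and> ns (Suc l) = n \<and> (\<forall>k\<le>l. ns k < ns (Suc k)) \<and>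
      E = (\<Union>k\<le>l. K_edges (ns k + 1) (ns (Suc k)))"
    by blast
next
  assume "\<exists>l ns. ns 0 = 0 \<and> ns (Suc l) = n \<and> (\<forall>k\<le>l. ns k < ns (Suc k)) \<and>
      E = (\<Union>k\<le>l. K_edges (ns k + 1) (ns (Suc k)))"
  then obtain l ns where ns: "ns 0 = 0" "ns (Suc l) = n" "\<forall>k\<le>l. ns k < ns (Suc k)"
    and "E = (\<Union>k\<le>l. K_edges (ns k + 1) (ns (Suc k)))"
    by blast
  then have "E = uncut_edges (ns ` {1..l}) n"
    using blocks_eq_uncut_edges[OF ns] by simp
  then show "Qtilde E face_of Qtilde (K_edges 1 n)"
    using face_of_Qtilde_uncut_edges[of "ns ` {1..l}" n] by simp
qed

end
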